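(* Let $a,b,e\in\mathbb{R}$ and let $\alpha_i(t)$ ($i=1,\dots,4$) be scalar continuous functions (not necessarily odd). (i) If $a(a+e)<0$, then the system $$\begin{aligned}\dot x&=(ax+by+xz)(1+\alpha_1(t))+x(a+z)\alpha_2(t)+y\alpha_3(t),\\ \dot y&=(-bx+ay+yz)(1+\alpha_1(t))+y(a+z)\alpha_2(t)-x\alpha_3(t),\\ \dot z&=(ez-x^2-y^2-z^2)(1+\alpha_1(t)+\alpha_2(t))\end{aligned}$$ has the solution $$x(t)=\sqrt{-a(a+e)}\,\sin\Big(bt+\int_0^t(b\alpha_1(s)+\alpha_3(s))\,ds\Big),\quad y(t)=\sqrt{-a(a+e)}\,\cos\Big(bt+\int_0^t(b\alpha_1(s)+\alpha_3(s))\,ds\Big),\quad z(t)=-a,$$ lying on the cycle $x^2+y^2=-a(a+e)$, $z=-a$. (ii) The system $$\begin{aligned}\dot x&=(ax+by+xz)(1+\alpha_1(t))+x(a+z)\alpha_2(t)+y\alpha_3(t)-y(x^2+y^2)(4az+x^2+y^2+2z^2)\alpha_4(t),\\ \dot y&=(-bx+ay+yz)(1+\alpha_1(t))+y(a+z)\alpha_2(t)-x\alpha_3(t)+x(x^2+y^2)(4az+x^2+y^2+2z^2)\alpha_4(t),\\ \dot z&=-(2az+x^2+y^2+z^2)(1+\alpha_1(t)+\alpha_2(t))\end{aligned}$$ has the solution $$x(t)=a\sin\Big(bt+\int_0^t(b\alpha_1(s)+\alpha_3(s)+a^4\alpha_4(s))\,ds\Big),\quad y(t)=a\cos\Big(bt+\int_0^t(b\alpha_1(s)+\alpha_3(s)+a^4\alpha_4(s))\,ds\Big),\quad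 z(t)=-a,$$ lying on the cycle $x^2+y^2=a^2$, $z=-a$. *)

theory Defs
  imports "HOL-Analysis.Analysis"
begin

end

theory Submission
  imports Defs
begin

(* On the plane z = -a the terms x(a + z) and ax + xz vanish, so both systems reduce in (x, y) to
   a rotation x' = \<omega> y, y' = -\<omega> x, solved by (r sin \<theta>, r cos \<theta>) whenever \<theta>' = \<omega>; the
   fundamental theorem of calculus makes the given phase \<theta> such an antiderivative. On the circle
   x\<^sup>2 + y\<^sup>2 = r\<^sup>2 with the stated radius the z-equation has right-hand side 0, so z = -a
   stays constant. *)

lemma has_real_derivative_interval_integral:
  fixes g :: "real \<Rightarrow> real" and c x :: real
  assumes "continuous_on UNIV g"
  shows "((\<lambda>u. LBINT s=c..u. g s) has_real_derivative g x) (at x)"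
proof -
  define lo hi :: real where "lo = min c x - 1" and "hi = max c x + 1"
  have "((\<lambda>u. LBINT s=c..u. g s) has_vector_derivative g x) (at x within {lo..hi})"
    using interval_integral_FTC2[of lo c hi g x] continuous_on_subset[OF assms]
    by (auto simp: lo_def hi_def)
  then have "((\<lambda>u. LBINT s=c..u. g s) has_vector_derivative g x) (at x within {lo<..<hi})"
    by (rule has_vector_derivative_within_subset) auto
  then have "((\<lambda>u. LBINT s=c..u. g s) has_vector_derivative g x) (at x)"
    by (subst (asm) at_within_open) (auto simp: lo_def hi_def)
  then show ?thesis
    by (simp add: has_real_derivative_iff_has_vector_derivative)
qed

lemma phase_has_real_derivative:
  fixes \<omega> :: "real \<Rightarrow> real"
  assumes "continuous_on UNIV \<omega>"
  shows "((\<lambda>t. b * t + (LBINT s=0..t. \<omega> s)) has_real_derivative b + \<omega> t) (at t)"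
  using has_real_derivative_interval_integral[OF assms, of 0]
  by (auto intro!: derivative_eq_intros simp: zero_ereal_def)

lemma circular_motion_has_real_derivative:
  assumes "(\<theta> has_real_derivative \<omega>) (at t)"
  shows "((\<lambda>t. r * sin (\<theta> t)) has_real_derivative \<omega> * (r * cos (\<theta> t))) (at t)"
    and "((\<lambda>t. r * cos (\<theta> t)) has_real_derivative - \<omega> * (r * sin (\<theta> t))) (at t)"
  using assms by (auto intro!: derivative_eq_intros)

lemma circle_radius_squared: "(r * sin \<theta>)\<^sup>2 + (r * cos \<theta>)\<^sup>2 = (r::real)\<^sup>2"
  by (metis mult.right_neutral power_mult_distrib sin_cos_squared_add distrib_left)

lemma cycle_solution_i:
  fixes \<theta> \<alpha>1 \<alpha>2 \<alpha>3 :: "real \<Rightarrow> real"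
  assumes phase: "\<And>t. (\<theta> has_real_derivative b + (b * \<alpha>1 t + \<alpha>3 t)) (at t)"
    and radius: "r\<^sup>2 = - a * (a + e)"
  defines "x \<equiv> \<lambda>t. r * sin (\<theta> t)" and "y \<equiv> \<lambda>t. r * cos (\<theta> t)" and "z \<equiv> \<lambda>t::real. - a"
  shows "(x has_real_derivative
          (a * x t + b * y t + x t * z t) * (1 + \<alpha>1 t) + x t * (a + z t) * \<alpha>2 t + y t * \<alpha>3 t) (at t)"
      (is "(_ has_real_derivative ?dx) _")
    and "(y has_real_derivative
          (- b * x t + a * y t + y t * z t) * (1 + \<alpha>1 t) + y t * (a + z t) * \<alpha>2 t - x t * \<alpha>3 t) (at t)"
      (is "(_ has_real_derivative ?dy) _")
    and "(z has_real_derivative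
          (e * z t - (x t)\<^sup>2 - (y t)\<^sup>2 - (z t)\<^sup>2) * (1 + \<alpha>1 t + \<alpha>2 t)) (at t)"
      (is "(_ has_real_derivative ?F * _) _")
    and "(x t)\<^sup>2 + (y t)\<^sup>2 = - a * (a + e)"
proof -
  show on_cycle: "(x t)\<^sup>2 + (y t)\<^sup>2 = - a * (a + e)"
    using circle_radius_squared radius by (simp add: x_def y_def)
  have "(x has_real_derivative (b + (b * \<alpha>1 t + \<alpha>3 t)) * y t) (at t)"
    unfolding x_def y_def by (rule circular_motion_has_real_derivative(1)[OF phase])
  then show "(x has_real_derivative ?dx) (at t)"
    by (rule DERIV_cong) (unfold z_def, algebra)
  have "(y has_real_derivative - (b + (b * \<alpha>1 t + \<alpha>3 t)) * x t) (at t)"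
    unfolding x_def y_def by (rule circular_motion_has_real_derivative(2)[OF phase])
  then show "(y has_real_derivative ?dy) (at t)"
    by (rule DERIV_cong) (unfold z_def, algebra)
  have "?F = 0"
    using on_cycle unfolding z_def by algebra
  then show "(z has_real_derivative ?F * (1 + \<alpha>1 t + \<alpha>2 t)) (at t)"
    by (simp add: z_def)
qed

lemma cycle_solution_ii:
  fixes \<theta> \<alpha>1 \<alpha>2 \<alpha>3 \<alpha>4 :: "real \<Rightarrow> real"
  assumes phase: "\<And>t. (\<theta> has_real_derivative b + (b * \<alpha>1 t + \<alpha>3 t + a ^ 4 * \<alpha>4 t)) (at t)"
    and radius: "r\<^sup>2 = a\<^sup>2"
  defines "x \<equiv> \<lambda>t. r * sin (\<theta> t)" and "y \<equiv> \<lambda>t. r * cos (\<theta> t)" and "z \<equiv> \<lambda>t::real. - a"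
  shows "(x has_real_derivative
          (a * x t + b * y t + x t * z t) * (1 + \<alpha>1 t) + x t * (a + z t) * \<alpha>2 t + y t * \<alpha>3 t
          - y t * ((x t)\<^sup>2 + (y t)\<^sup>2) * (4 * a * z t + (x t)\<^sup>2 + (y t)\<^sup>2 + 2 * (z t)\<^sup>2) * \<alpha>4 t) (at t)"
      (is "(_ has_real_derivative ?dx) _")
    and "(y has_real_derivative
          (- b * x t + a * y t + y t * z t) * (1 + \<alpha>1 t) + y t * (a + z t) * \<alpha>2 t - x t * \<alpha>3 t
          + x t * ((x t)\<^sup>2 + (y t)\<^sup>2) * (4 * a * z t + (x t)\<^sup>2 + (y t)\<^sup>2 + 2 * (z t)\<^sup>2) * \<alpha>4 t) (at t)"
      (is "(_ has_real_derivative ?dy) _")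
    and "(z has_real_derivative
          - (2 * a * z t + (x t)\<^sup>2 + (y t)\<^sup>2 + (z t)\<^sup>2) * (1 + \<alpha>1 t + \<alpha>2 t)) (at t)"
      (is "(_ has_real_derivative ?F * _) _")
    and "(x t)\<^sup>2 + (y t)\<^sup>2 = a\<^sup>2"
proof -
  show on_cycle: "(x t)\<^sup>2 + (y t)\<^sup>2 = a\<^sup>2"
    using circle_radius_squared radius by (simp add: x_def y_def)
  \<comment> \<open>on the cycle the \<open>\<alpha>4\<close>-terms just add \<open>a ^ 4 * \<alpha>4\<close> to the angular speed\<close>
  have alpha4_factor_on_cycle: "((x t)\<^sup>2 + (y t)\<^sup>2) * (4 * a * z t + (x t)\<^sup>2 + (y t)\<^sup>2 + 2 * (z t)\<^sup>2) = - (a ^ 4)"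
    using on_cycle unfolding z_def by algebra
  have "(x has_real_derivative (b + (b * \<alpha>1 t + \<alpha>3 t + a ^ 4 * \<alpha>4 t)) * y t) (at t)"
    unfolding x_def y_def by (rule circular_motion_has_real_derivative(1)[OF phase])
  then show "(x has_real_derivative ?dx) (at t)"
    by (rule DERIV_cong) (use alpha4_factor_on_cycle in \<open>unfold z_def, algebra\<close>)
  have "(y has_real_derivative - (b + (b * \<alpha>1 t + \<alpha>3 t + a ^ 4 * \<alpha>4 t)) * x t) (at t)"
    unfolding x_def y_def by (rule circular_motion_has_real_derivative(2)[OF phase])
  then show "(y has_real_derivative ?dy) (at t)"
    by (rule DERIV_cong) (use alpha4_factor_on_cycle in \<open>unfold z_def, algebra\<close>)
  have "?F = 0"
    using on_cycle unfolding z_def by algebra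
  then show "(z has_real_derivative ?F * (1 + \<alpha>1 t + \<alpha>2 t)) (at t)"
    by (simp add: z_def)
qed

theorem lemma1:
  fixes a b e :: real and \<alpha>1 \<alpha>2 \<alpha>3 \<alpha>4 :: "real \<Rightarrow> real"
  assumes "continuous_on UNIV \<alpha>1" and "continuous_on UNIV \<alpha>2"
      and "continuous_on UNIV \<alpha>3" and "continuous_on UNIV \<alpha>4"
  shows
   "(a * (a + e) < 0 \<longrightarrow>
      (let \<theta> = (\<lambda>t. b * t + (LBINT s=0..t. b * \<alpha>1 s + \<alpha>3 s));
           x = (\<lambda>t. sqrt (- a * (a + e)) * sin (\<theta> t));
           y = (\<lambda>t. sqrt (- a * (a + e)) * cos (\<theta> t));
           z = (\<lambda>t::real. - a)
       in (\<forall>t. (x has_real_derivative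
                  ((a * x t + b * y t + x t * z t) * (1 + \<alpha>1 t) + x t * (a + z t) * \<alpha>2 t
                    + y t * \<alpha>3 t)) (at t)
             \<and> (y has_real_derivative
                  ((- b * x t + a * y t + y t * z t) * (1 + \<alpha>1 t) + y t * (a + z t) * \<alpha>2 t
                    - x t * \<alpha>3 t)) (at t)
             \<and> (z has_real_derivative
                  ((e * z t - (x t)\<^sup>2 - (y t)\<^sup>2 - (z t)\<^sup>2) * (1 + \<alpha>1 t + \<alpha>2 t))) (at t)
             \<and> (x t)\<^sup>2 + (y t)\<^sup>2 = - a * (a + e) \<and> z t = - a)))
    \<and>
    (let \<theta> = (\<lambda>t. b * t + (LBINT s=0..t. b * \<alpha>1 s + \<alpha>3 s + a ^ 4 * \<alpha>4 s));
         x = (\<lambda>t. a * sin (\<theta> t));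
         y = (\<lambda>t. a * cos (\<theta> t));
         z = (\<lambda>t::real. - a)
     in (\<forall>t. (x has_real_derivative
                ((a * x t + b * y t + x t * z t) * (1 + \<alpha>1 t) + x t * (a + z t) * \<alpha>2 t
                  + y t * \<alpha>3 t
                  - y t * ((x t)\<^sup>2 + (y t)\<^sup>2) * (4 * a * z t + (x t)\<^sup>2 + (y t)\<^sup>2 + 2 * (z t)\<^sup>2) * \<alpha>4 t)) (at t)
           \<and> (y has_real_derivative
                ((- b * x t + a * y t + y t * z t) * (1 + \<alpha>1 t) + y t * (a + z t) * \<alpha>2 t
                  - x t * \<alpha>3 t
                  + x t * ((x t)\<^sup>2 + (y t)\<^sup>2) * (4 * a * z t + (x t)\<^sup>2 + (y t)\<^sup>2 + 2 * (z t)\<^sup>2) * \<alpha>4 t)) (at t)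
           \<and> (z has_real_derivative
                (- (2 * a * z t + (x t)\<^sup>2 + (y t)\<^sup>2 + (z t)\<^sup>2) * (1 + \<alpha>1 t + \<alpha>2 t))) (at t)
           \<and> (x t)\<^sup>2 + (y t)\<^sup>2 = a\<^sup>2 \<and> z t = - a))"
proof -
  have phase_i: "((\<lambda>t. b * t + (LBINT s=0..t. b * \<alpha>1 s + \<alpha>3 s)) has_real_derivative
      b + (b * \<alpha>1 t + \<alpha>3 t)) (at t)" for t
    using assms by (intro phase_has_real_derivative continuous_intros) auto
  have phase_ii: "((\<lambda>t. b * t + (LBINT s=0..t. b * \<alpha>1 s + \<alpha>3 s + a ^ 4 * \<alpha>4 s)) has_real_derivative
      b + (b * \<alpha>1 t + \<alpha>3 t + a ^ 4 * \<alpha>4 t)) (at t)" for t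
    using assms by (intro phase_has_real_derivative continuous_intros) auto
  show ?thesis
    unfolding Let_def
    using cycle_solution_i[OF phase_i, of "sqrt (- a * (a + e))"] cycle_solution_ii[OF phase_ii, of a]
    by auto
qed

end
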